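(* Let $\phi_\mathcal{D}(z)$ be a power series with non-negative coefficients, $[z^0]\phi_\mathcal{D}>0$ and $[z^k]\phi_\mathcal{D}>0$ for some $k\ge2$, let $D(z)$ be the unique power series with $D(z)=z\,\phi_\mathcal{D}(D(z))$, and let $\phi(z)=1/(1-D(z))$. Types of $\phi_\mathcal{D}$ and of $\phi$ refer to the types of their coefficient sequences. (1) If $\phi_\mathcal{D}$ has type I, then $\phi$ has type I$a$ with $\nu=\infty$. (2) Suppose $\phi_\mathcal{D}$ has type II; let $\tau_\mathcal{D}$ be the radius of convergence of $\phi_\mathcal{D}$ and $\nu_\mathcal{D}=\lim_{t\uparrow\tau_\mathcal{D}}t\phi_\mathcal{D}'(t)/\phi_\mathcal{D}(t)\in(0,1)$. (a) If $\tau_\mathcal{D}<1$, then the parameter $\nu$ of $\phi$ equals $\nu=\frac{\tau_\mathcal{D}}{(1-\tau_\mathcal{D})(1-\nu_\mathcal{D})}\in(0,\infty)$. (b) If $\tau_\mathcal{D}\ge1$, then $\phi$ has type I$a$ with $\nu=\infty$. (3) If $\phi_\mathcal{D}$ has type III, then $\nu=0$, i.e. $\phi$ has type III.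
   Context: (Combinatorially, $\phi_\mathcal{D}$ is the generating series of the weighted $\textsc{SEQ}\circ\textsc{SEQ}_{\ge1}$-structures defining face-weighted dissections $D(z)$, and $\phi$ that of sequences of dissections, governing random outerplanar maps.) Types of a weight sequence $(\omega_k)_{k\ge0}$ with $\omega_0>0$ and $\omega_k>0$ for some $k\ge2$ and generating series $\Phi(z)=\sum\omega_kz^k$ of radius $\rho$: if $\rho>0$, $\Psi(t)=t\Phi'(t)/\Phi(t)$ on $[0,\rho)$ and $\nu=\lim_{t\uparrow\rho}\Psi(t)\in(0,\infty]$; if $\rho=0$, $\nu=0$. Type I: $\nu\ge1$; type I$a$: $\nu>1$; type II: $0<\nu<1$; type III: $\nu=0$. Here $\nu$ without subscript refers to $\Phi=\phi$. *)

theory Defs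
  imports "HOL-Analysis.Analysis" "HOL-Computational_Algebra.Formal_Power_Series"
begin

definition gen_series :: "(nat \<Rightarrow> real) \<Rightarrow> real \<Rightarrow> real" where
  "gen_series \<omega> t = (\<Sum>k. \<omega> k * t ^ k)"

definition Psi :: "(nat \<Rightarrow> real) \<Rightarrow> real \<Rightarrow> real" where
  "Psi \<omega> t = t * deriv (gen_series \<omega>) t / gen_series \<omega> t"

definition nu :: "(nat \<Rightarrow> real) \<Rightarrow> ereal" where
  "nu \<omega> = (if conv_radius \<omega> = 0 then 0
            else if conv_radius \<omega> = \<infinity> then Lim at_top (\<lambda>t. ereal (Psi \<omega> t))
            else Lim (at_left (real_of_ereal (conv_radius \<omega>))) (\<lambda>t. ereal (Psi \<omega> t)))"

definition typeI :: "(nat \<Rightarrow> real) \<Rightarrow> bool" where "typeI \<omega> \<longleftrightarrow> nu \<omega> \<ge> 1"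
definition typeIa :: "(nat \<Rightarrow> real) \<Rightarrow> bool" where "typeIa \<omega> \<longleftrightarrow> nu \<omega> > 1"
definition typeII :: "(nat \<Rightarrow> real) \<Rightarrow> bool" where "typeII \<omega> \<longleftrightarrow> 0 < nu \<omega> \<and> nu \<omega> < 1"
definition typeIII :: "(nat \<Rightarrow> real) \<Rightarrow> bool" where "typeIII \<omega> \<longleftrightarrow> nu \<omega> = 0"

end

theory Submission
  imports Defs
begin

text \<open>Write \<open>f, g, p\<close> for the sums of \<open>\<phi>\<^sub>D, D, \<phi>\<close> on the real line. Evaluated in
  \<open>ennreal\<close>, the equations \<open>D = z \<phi>\<^sub>D(D)\<close> and \<open>\<phi> = 1 + D \<phi>\<close> become unconditional identities of
  monotone maps, and \<open>D\<close> is their least solution: \<open>G(x) \<le> y\<close> as soon as \<open>x F(y) \<le> y\<close>. This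
  locates the radius \<open>r\<close> of \<open>\<phi>\<close>: below it \<open>g < 1\<close>, \<open>p = 1/(1 - g)\<close>, \<open>g = t f(g)\<close>, and implicit
  differentiation gives \<open>\<Psi>\<^sub>\<phi>(t) = g / ((1 - E(g)) (1 - g))\<close>, where \<open>E(y) = y f'(y)/f(y)\<close>
  is nondecreasing with supremum \<open>\<nu>\<^sub>D\<close>. Let \<open>L\<close> be the limit of \<open>g\<close> at \<open>r\<close>. If \<open>L = 1\<close>,
  \<open>\<Psi>\<^sub>\<phi>\<close> blows up. If \<open>L < min 1 \<tau>\<^sub>D\<close>, the inverse \<open>y / f(y)\<close> of \<open>g\<close> must stop increasing
  at \<open>L\<close>, so \<open>E(L) = 1\<close> and \<open>\<Psi>\<^sub>\<phi>\<close> blows up again. Otherwise \<open>L = \<tau>\<^sub>D < 1\<close>, \<open>E(g) \<rightarrow> \<nu>\<^sub>D\<close>,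
  and \<open>\<Psi>\<^sub>\<phi>\<close> tends to \<open>\<tau>\<^sub>D / ((1 - \<tau>\<^sub>D)(1 - \<nu>\<^sub>D))\<close> if \<open>\<nu>\<^sub>D < 1\<close> and to \<open>\<infinity>\<close> if \<open>\<nu>\<^sub>D = 1\<close>.\<close>

section \<open>Nonnegative power series evaluated in the extended nonnegative reals\<close>

lemma suminf_ennreal_swap:
  fixes u :: "nat \<Rightarrow> nat \<Rightarrow> ennreal"
  shows "(\<Sum>i. \<Sum>j. u i j) = (\<Sum>j. \<Sum>i. u i j)"
  using nn_integral_suminf[of "\<lambda>i j. u i j" "count_space UNIV"]
  by (simp add: nn_integral_count_space_nat)

lemma ennreal_Cauchy_product:
  fixes u v :: "nat \<Rightarrow> ennreal"
  shows "(\<Sum>n. \<Sum>i\<le>n. u i * v (n - i)) = (\<Sum>i. u i) * (\<Sum>j. v j)"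
proof -
  have "(\<Sum>n. \<Sum>i\<le>n. u i * v (n - i)) = (\<Sum>n. \<Sum>i. if i \<le> n then u i * v (n - i) else 0)"
    by (intro suminf_cong, subst suminf_finite[of "{..n}" for n]) auto
  also have "\<dots> = (\<Sum>i. \<Sum>n. if i \<le> n then u i * v (n - i) else 0)"
    by (rule suminf_ennreal_swap)
  also have "\<dots> = (\<Sum>i. u i * (\<Sum>j. v j))"
  proof (rule suminf_cong)
    fix i
    have "(\<Sum>n. if i \<le> n then u i * v (n - i) else 0)
        = (\<Sum>j. u i * v j) + (\<Sum>n<i. if i \<le> n then u i * v (n - i) else 0)"
      by (subst suminf_offset[of _ i]) auto
    then show "(\<Sum>n. if i \<le> n then u i * v (n - i) else 0) = u i * (\<Sum>j. v j)"
      by simp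
  qed
  finally show ?thesis by simp
qed

lemma suminf_le_fixpoint:
  fixes u :: "nat \<Rightarrow> ennreal"
  assumes step: "\<And>N. (\<Sum>n<Suc N. u n) \<le> f (\<Sum>n<N. u n)" and "mono f" and "f y \<le> y"
  shows "(\<Sum>n. u n) \<le> y"
proof -
  have "(\<Sum>n<N. u n) \<le> y" for N
  proof (induction N)
    case (Suc N)
    then show ?case
      using step[of N] monoD[OF \<open>mono f\<close> Suc.IH] \<open>f y \<le> y\<close> by (meson order.trans)
  qed simp
  then show ?thesis
    by (rule suminf_le_const[OF summableI])
qed

definition nonneg_fps :: "real fps \<Rightarrow> bool" where
  "nonneg_fps A \<longleftrightarrow> (\<forall>n. 0 \<le> fps_nth A n)"

lemma nonneg_fps_one: "nonneg_fps 1"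
  by (simp add: nonneg_fps_def)

lemma nonneg_fps_add: "nonneg_fps A \<Longrightarrow> nonneg_fps B \<Longrightarrow> nonneg_fps (A + B)"
  by (simp add: nonneg_fps_def)

lemma nonneg_fps_mult: "nonneg_fps A \<Longrightarrow> nonneg_fps B \<Longrightarrow> nonneg_fps (A * B)"
  unfolding nonneg_fps_def fps_mult_nth by (auto intro!: sum_nonneg)

lemma nonneg_fps_power: "nonneg_fps A \<Longrightarrow> nonneg_fps (A ^ n)"
  by (induction n) (simp_all add: nonneg_fps_mult nonneg_fps_one)

lemma nonneg_fps_compose: "nonneg_fps A \<Longrightarrow> nonneg_fps B \<Longrightarrow> nonneg_fps (A oo B)"
  using nonneg_fps_power[of B] unfolding nonneg_fps_def fps_compose_nth
  by (auto intro!: sum_nonneg)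

lemma nonneg_fps_cutoff: "nonneg_fps A \<Longrightarrow> nonneg_fps (fps_cutoff n A)"
  by (simp add: nonneg_fps_def)

lemma fps_cutoff_power_nth:
  "k < n \<Longrightarrow> fps_nth (fps_cutoff n A ^ i) k = fps_nth (A ^ i) k"
proof (induction i arbitrary: k)
  case (Suc i)
  then show ?case
    by (simp add: fps_mult_nth fps_cutoff_left_mult_nth[symmetric, of k n A])
qed simp

lemma fps_compose_cutoff_nth:
  "k < n \<Longrightarrow> fps_nth (A oo fps_cutoff n B) k = fps_nth (A oo B) k"
  by (simp add: fps_compose_nth fps_cutoff_power_nth)

lemma fps_mult_cutoff_nth:
  fixes A B :: "'a::semiring_0 fps"
  assumes "fps_nth B 0 = 0" "k \<le> n"
  shows "fps_nth (B * fps_cutoff n A) k = fps_nth (B * A) k"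
  unfolding fps_mult_nth
proof (intro sum.cong refl)
  fix j assume "j \<in> {0..k}"
  then show "fps_nth B j * fps_nth (fps_cutoff n A) (k - j) = fps_nth B j * fps_nth A (k - j)"
    using assms by (cases "j = 0") auto
qed

definition ennreal_powser :: "(nat \<Rightarrow> real) \<Rightarrow> ennreal \<Rightarrow> ennreal" where
  "ennreal_powser b x = (\<Sum>n. ennreal (b n) * x ^ n)"

lemma ennreal_powser_mono: "x \<le> y \<Longrightarrow> ennreal_powser b x \<le> ennreal_powser b y"
  unfolding ennreal_powser_def by (intro suminf_le mult_left_mono power_mono) auto

lemma ennreal_powser_partial_sum_le: "(\<Sum>n<N. ennreal (b n) * x ^ n) \<le> ennreal_powser b x"
  unfolding ennreal_powser_def by (rule sum_le_suminf) auto

lemma ennreal_powser_cutoff: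
  "ennreal_powser (fps_nth (fps_cutoff N A)) x = (\<Sum>n<N. ennreal (fps_nth A n) * x ^ n)"
  unfolding ennreal_powser_def by (subst suminf_finite[of "{..<N}"]) auto

lemma ennreal_powser_one: "ennreal_powser (fps_nth 1) x = 1"
  unfolding ennreal_powser_def by (subst suminf_finite[of "{0}"]) auto

lemma ennreal_powser_add:
  "nonneg_fps A \<Longrightarrow> nonneg_fps B \<Longrightarrow>
   ennreal_powser (fps_nth (A + B)) x = ennreal_powser (fps_nth A) x + ennreal_powser (fps_nth B) x"
  unfolding ennreal_powser_def nonneg_fps_def
  by (simp add: distrib_right suminf_add[symmetric])

lemma ennreal_powser_mult:
  assumes "nonneg_fps A" "nonneg_fps B"
  shows "ennreal_powser (fps_nth (A * B)) x = ennreal_powser (fps_nth A) x * ennreal_powser (fps_nth B) x"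
proof -
  have "ennreal (fps_nth (A * B) n) * x ^ n =
    (\<Sum>i\<le>n. ennreal (fps_nth A i) * x ^ i * (ennreal (fps_nth B (n - i)) * x ^ (n - i)))" for n
  proof -
    have "ennreal (fps_nth (A * B) n) = (\<Sum>i\<le>n. ennreal (fps_nth A i) * ennreal (fps_nth B (n - i)))"
      using assms unfolding nonneg_fps_def fps_mult_nth
      by (simp add: atLeast0AtMost ennreal_mult sum_nonneg flip: sum_ennreal)
    then have "ennreal (fps_nth (A * B) n) * x ^ n =
      (\<Sum>i\<le>n. ennreal (fps_nth A i) * ennreal (fps_nth B (n - i)) * x ^ n)"
      by (simp add: sum_distrib_right)
    also have "\<dots> = (\<Sum>i\<le>n. ennreal (fps_nth A i) * x ^ i * (ennreal (fps_nth B (n - i)) * x ^ (n - i)))"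
      by (intro sum.cong refl)
        (metis (no_types, lifting) atMost_iff le_add_diff_inverse mult.assoc mult.left_commute power_add)
    finally show ?thesis .
  qed
  then show ?thesis
    using ennreal_Cauchy_product[of "\<lambda>i. ennreal (fps_nth A i) * x ^ i" "\<lambda>j. ennreal (fps_nth B j) * x ^ j"]
    unfolding ennreal_powser_def by simp
qed

lemma ennreal_powser_power:
  "nonneg_fps A \<Longrightarrow> ennreal_powser (fps_nth (A ^ n)) x = ennreal_powser (fps_nth A) x ^ n"
  by (induction n) (simp_all add: ennreal_powser_one ennreal_powser_mult nonneg_fps_power)

lemma ennreal_powser_X_mult:
  "ennreal_powser (fps_nth (fps_X * A)) x = x * ennreal_powser (fps_nth A) x"
proof -
  have "ennreal_powser (fps_nth (fps_X * A)) x =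
      (\<Sum>n. ennreal (fps_nth (fps_X * A) (n + 1)) * x ^ (n + 1)) + ennreal (fps_nth (fps_X * A) 0)"
    unfolding ennreal_powser_def by (subst suminf_offset[of _ 1]) auto
  then show ?thesis
    unfolding ennreal_powser_def by (simp add: mult_ac)
qed

lemma ennreal_powser_compose:
  assumes A: "nonneg_fps A" and B: "nonneg_fps B" "fps_nth B 0 = 0"
  shows "ennreal_powser (fps_nth (A oo B)) x =
    ennreal_powser (fps_nth A) (ennreal_powser (fps_nth B) x)"
proof -
  have "ennreal (fps_nth (A oo B) n) * x ^ n =
    (\<Sum>i. ennreal (fps_nth A i) * (ennreal (fps_nth (B ^ i) n) * x ^ n))" for n
  proof -
    have "ennreal (fps_nth (A oo B) n) = (\<Sum>i\<le>n. ennreal (fps_nth A i) * ennreal (fps_nth (B ^ i) n))"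
      using A nonneg_fps_power[OF B(1)] unfolding nonneg_fps_def fps_compose_nth
      by (simp add: atLeast0AtMost ennreal_mult sum_nonneg flip: sum_ennreal)
    also have "\<dots> = (\<Sum>i. ennreal (fps_nth A i) * ennreal (fps_nth (B ^ i) n))"
      using startsby_zero_power_prefix[OF B(2)] by (subst suminf_finite[of "{..n}"]) auto
    finally show ?thesis
      by (simp add: mult.assoc flip: ennreal_suminf_multc)
  qed
  then have "ennreal_powser (fps_nth (A oo B)) x =
    (\<Sum>n. \<Sum>i. ennreal (fps_nth A i) * (ennreal (fps_nth (B ^ i) n) * x ^ n))"
    unfolding ennreal_powser_def by simp
  also have "\<dots> = (\<Sum>i. ennreal (fps_nth A i) * ennreal_powser (fps_nth (B ^ i)) x)"
    unfolding ennreal_powser_def by (subst suminf_ennreal_swap) simp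
  also have "\<dots> = ennreal_powser (fps_nth A) (ennreal_powser (fps_nth B) x)"
    unfolding ennreal_powser_def[of "fps_nth A"] by (simp add: ennreal_powser_power B)
  finally show ?thesis .
qed

lemma ennreal_powser_eq_gen_series:
  assumes "\<And>n. 0 \<le> b n" "0 \<le> t" "summable (\<lambda>n. b n * t ^ n)"
  shows "ennreal_powser b (ennreal t) = ennreal (gen_series b t)"
  using assms unfolding ennreal_powser_def gen_series_def
  by (simp add: suminf_ennreal2 ennreal_power flip: ennreal_mult)

lemma ennreal_powser_finite:
  assumes b: "\<And>n. 0 \<le> b n" and t: "0 \<le> t" and fin: "ennreal_powser b (ennreal t) < \<infinity>"
  shows "summable (\<lambda>n. b n * t ^ n)" "ereal t \<le> conv_radius b"
proof -
  have "ennreal_powser b (ennreal t) = (\<Sum>n. ennreal (b n * t ^ n))"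
    unfolding ennreal_powser_def using b t by (simp add: ennreal_mult ennreal_power)
  then show s: "summable (\<lambda>n. b n * t ^ n)"
    using fin b t by (intro summable_suminf_not_top) auto
  show "ereal t \<le> conv_radius b"
    using conv_radius_geI[OF s] t by simp
qed

lemma ennreal_powser_eq_gen_series_in_radius:
  assumes "\<And>n. 0 \<le> b n" "0 \<le> t" "ereal t < conv_radius b"
  shows "ennreal_powser b (ennreal t) = ennreal (gen_series b t)"
  using assms summable_in_conv_radius[of t b] by (intro ennreal_powser_eq_gen_series) auto

section \<open>Real power series and their elasticity\<close>

lemma conv_radius_le_conv_radius_diffs: "conv_radius b \<le> conv_radius (diffs (b :: nat \<Rightarrow> real))"
proof -
  have "fps_nth (fps_deriv (Abs_fps b)) = diffs b"
    by (rule ext) (simp add: fps_deriv_def diffs_def)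
  then show ?thesis
    using fps_conv_radius_deriv[of "Abs_fps b"] by (simp add: fps_conv_radius_def)
qed

lemma diffs_nonneg: "(\<And>n. 0 \<le> b n) \<Longrightarrow> 0 \<le> diffs b n"
  for b :: "nat \<Rightarrow> real"
  by (simp add: diffs_def)

lemma gen_series_has_real_derivative:
  "ereal \<bar>y\<bar> < conv_radius b \<Longrightarrow> (gen_series b has_real_derivative gen_series (diffs b) y) (at y)"
  using has_field_derivative_powser[of y b] unfolding gen_series_def[abs_def] by simp

lemma isCont_gen_series: "ereal \<bar>y\<bar> < conv_radius b \<Longrightarrow> isCont (gen_series b) y"
  using gen_series_has_real_derivative DERIV_isCont by blast

lemma gen_series_term_le:
  assumes "\<And>n. 0 \<le> b n" "0 \<le> y" "ereal y < conv_radius b"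
  shows "b n * y ^ n \<le> gen_series b y"
proof -
  have "(\<Sum>i\<in>{n}. b i * y ^ i) \<le> (\<Sum>i. b i * y ^ i)"
    using summable_in_conv_radius[of y b] assms by (intro sum_le_suminf) auto
  then show ?thesis
    by (simp add: gen_series_def)
qed

lemma gen_series_nonneg:
  assumes "\<And>n. 0 \<le> b n" "0 \<le> y" "ereal y < conv_radius b"
  shows "0 \<le> gen_series b y"
  unfolding gen_series_def using assms summable_in_conv_radius[of y b] by (intro suminf_nonneg) auto

definition elasticity :: "(nat \<Rightarrow> real) \<Rightarrow> real \<Rightarrow> real" where
  "elasticity b y = y * gen_series (diffs b) y / gen_series b y"

lemma Psi_eq_elasticity: "ereal \<bar>y\<bar> < conv_radius b \<Longrightarrow> Psi b y = elasticity b y"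
  unfolding Psi_def elasticity_def using DERIV_imp_deriv[OF gen_series_has_real_derivative] by simp

lemma elasticity_nonneg:
  assumes "\<And>n. 0 \<le> b n" "0 \<le> y" "ereal y < conv_radius b"
  shows "0 \<le> elasticity b y"
proof -
  have "ereal y < conv_radius (diffs b)"
    using assms(3) conv_radius_le_conv_radius_diffs[of b] by (rule order.strict_trans2)
  then show ?thesis
    unfolding elasticity_def using assms diffs_nonneg[of b]
    by (intro divide_nonneg_nonneg mult_nonneg_nonneg gen_series_nonneg) auto
qed

lemma isCont_elasticity:
  assumes "ereal \<bar>y\<bar> < conv_radius b" "gen_series b y \<noteq> 0"
  shows "isCont (elasticity b) y"
proof -
  have "ereal \<bar>y\<bar> < conv_radius (diffs b)"
    using assms(1) conv_radius_le_conv_radius_diffs[of b] by (rule order.strict_trans2)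
  then show ?thesis
    unfolding elasticity_def[abs_def] using assms isCont_gen_series[of y]
    by (intro continuous_intros) auto
qed

lemma sums_of_nat_mult_powser:
  assumes "ereal \<bar>y\<bar> < conv_radius b"
  shows "(\<lambda>n. real n * b n * y ^ n) sums (y * gen_series (diffs b) y)"
proof -
  have "ereal \<bar>y\<bar> < conv_radius (diffs b)"
    using assms conv_radius_le_conv_radius_diffs[of b] by (rule order.strict_trans2)
  then have "(\<lambda>n. y * (diffs b n * y ^ n)) sums (y * gen_series (diffs b) y)"
    unfolding gen_series_def using summable_in_conv_radius[of y "diffs b"]
    by (intro sums_mult summable_sums) simp
  then have "(\<lambda>n. (\<lambda>n. real n * b n * y ^ n) (Suc n)) sums (y * gen_series (diffs b) y)"
    by (simp add: diffs_def mult_ac)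
  then show ?thesis
    by (subst (asm) sums_Suc_iff) simp
qed

lemma pow_cross_le:
  fixes y1 y2 :: real
  assumes "0 \<le> y1" "y1 \<le> y2" "m \<le> n"
  shows "y1 ^ n * y2 ^ m \<le> y2 ^ n * y1 ^ m"
proof -
  obtain k where n: "n = m + k"
    using assms(3) le_Suc_ex by blast
  have "y1 ^ n * y2 ^ m = (y1 * y2) ^ m * y1 ^ k"
    by (simp add: n power_add power_mult_distrib mult_ac)
  also have "\<dots> \<le> (y1 * y2) ^ m * y2 ^ k"
    using assms by (intro mult_left_mono power_mono) auto
  also have "\<dots> = y2 ^ n * y1 ^ m"
    by (simp add: n power_add power_mult_distrib mult_ac)
  finally show ?thesis .
qed

text \<open>Symmetrising the double sum, the pair \<open>(n, m)\<close> contributes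
  \<open>b n b m (n - m) (y2^n y1^m - y1^n y2^m) \<ge> 0\<close>.\<close>
lemma partial_sums_elasticity_cross_le:
  fixes y1 y2 :: real
  assumes b: "\<And>n. 0 \<le> b n" and y: "0 \<le> y1" "y1 \<le> y2"
  shows "(\<Sum>n<N. real n * b n * y1 ^ n) * (\<Sum>n<N. b n * y2 ^ n) \<le>
         (\<Sum>n<N. real n * b n * y2 ^ n) * (\<Sum>n<N. b n * y1 ^ n)"
proof -
  define c where "c n m = real n * b n * b m * (y2 ^ n * y1 ^ m - y1 ^ n * y2 ^ m)" for n m
  have diff: "(\<Sum>n<N. real n * b n * y2 ^ n) * (\<Sum>n<N. b n * y1 ^ n) -
      (\<Sum>n<N. real n * b n * y1 ^ n) * (\<Sum>n<N. b n * y2 ^ n) = (\<Sum>n<N. \<Sum>m<N. c n m)"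
    unfolding sum_product sum_subtractf[symmetric] by (intro sum.cong refl) (simp add: c_def algebra_simps)
  have "2 * (\<Sum>n<N. \<Sum>m<N. c n m) = (\<Sum>n<N. \<Sum>m<N. c n m) + (\<Sum>n<N. \<Sum>m<N. c m n)"
    using sum.swap[of c "{..<N}" "{..<N}"] by simp
  also have "\<dots> = (\<Sum>n<N. \<Sum>m<N. b n * b m * ((real n - real m) * (y2 ^ n * y1 ^ m - y1 ^ n * y2 ^ m)))"
    by (simp add: c_def sum.distrib[symmetric] algebra_simps)
  also have "\<dots> \<ge> 0"
  proof (intro sum_nonneg)
    fix n m
    have "0 \<le> (real n - real m) * (y2 ^ n * y1 ^ m - y1 ^ n * y2 ^ m)"
    proof (cases "m \<le> n")
      case True
      then show ?thesis using pow_cross_le[OF y True] by simp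
    next
      case False
      then show ?thesis using pow_cross_le[OF y, of n m]
        by (intro mult_nonpos_nonpos) (auto simp: mult.commute)
    qed
    then show "0 \<le> b n * b m * ((real n - real m) * (y2 ^ n * y1 ^ m - y1 ^ n * y2 ^ m))"
      using b by simp
  qed
  finally show ?thesis
    using diff by simp
qed

lemma elasticity_mono:
  assumes b: "\<And>n. 0 \<le> b n" "0 < b 0"
    and y: "0 \<le> y1" "y1 \<le> y2" "ereal y2 < conv_radius b"
  shows "elasticity b y1 \<le> elasticity b y2"
proof -
  have r: "ereal \<bar>y1\<bar> < conv_radius b" "ereal \<bar>y2\<bar> < conv_radius b"
    using y le_less_trans[of "ereal y1" "ereal y2"] by auto
  define Q where "Q y = y * gen_series (diffs b) y" for y
  have P: "(\<lambda>N. \<Sum>n<N. b n * y ^ n) \<longlonglongrightarrow> gen_series b y" if "ereal \<bar>y\<bar> < conv_radius b" for y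
    unfolding gen_series_def using summable_in_conv_radius[of y b] that by (intro summable_LIMSEQ) simp
  have Q: "(\<lambda>N. \<Sum>n<N. real n * b n * y ^ n) \<longlonglongrightarrow> Q y" if "ereal \<bar>y\<bar> < conv_radius b" for y
    using sums_of_nat_mult_powser[OF that] unfolding Q_def sums_def .
  have "Q y1 * gen_series b y2 \<le> Q y2 * gen_series b y1"
    using partial_sums_elasticity_cross_le[OF b(1) y(1,2)] r
    by (intro LIMSEQ_le[OF tendsto_mult[OF Q P] tendsto_mult[OF Q P]]) auto
  moreover have "0 < gen_series b y" if "0 \<le> y" "ereal y < conv_radius b" for y
    using gen_series_term_le[of b y 0] b that by simp
  ultimately show ?thesis
    unfolding elasticity_def Q_def[symmetric] using r y by (simp add: field_simps)
qed

lemma tendsto_at_left_SUP_mono: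
  fixes f :: "real \<Rightarrow> 'a::{conditionally_complete_linorder, linorder_topology}"
  assumes "0 < r" and mono: "\<And>x y. 0 < x \<Longrightarrow> x \<le> y \<Longrightarrow> y < r \<Longrightarrow> f x \<le> f y"
    and bdd: "bdd_above (f ` {0<..<r})"
  shows "(f \<longlongrightarrow> (SUP x\<in>{0<..<r}. f x)) (at_left r)"
proof (rule order_tendstoI)
  fix y assume "y < (SUP x\<in>{0<..<r}. f x)"
  then obtain x0 where x0: "x0 \<in> {0<..<r}" "y < f x0"
    using less_cSUP_iff[OF _ bdd] \<open>0 < r\<close> by auto
  have "eventually (\<lambda>x. x \<in> {x0<..<r}) (at_left r)"
    using x0 by (intro eventually_at_left_real) auto
  then show "eventually (\<lambda>x. y < f x) (at_left r)"
  proof (rule eventually_mono)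
    fix x assume "x \<in> {x0<..<r}"
    then have "f x0 \<le> f x"
      using mono x0 by auto
    then show "y < f x"
      using x0 by (meson order.strict_trans2)
  qed
next
  fix y assume y: "(SUP x\<in>{0<..<r}. f x) < y"
  have "eventually (\<lambda>x. x \<in> {0<..<r}) (at_left r)"
    using \<open>0 < r\<close> by (intro eventually_at_left_real) auto
  then show "eventually (\<lambda>x. f x < y) (at_left r)"
    by (rule eventually_mono) (use cSUP_upper[OF _ bdd] y in force)
qed

lemma tendsto_at_top_SUP_mono:
  fixes f :: "real \<Rightarrow> 'a::{complete_linorder, linorder_topology}"
  assumes mono: "\<And>x y. 0 < x \<Longrightarrow> x \<le> y \<Longrightarrow> f x \<le> f y"
  shows "(f \<longlongrightarrow> (SUP x\<in>{0<..}. f x)) at_top"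
proof (rule order_tendstoI)
  fix y assume "y < (SUP x\<in>{0<..}. f x)"
  then obtain x0 where x0: "0 < x0" "y < f x0"
    by (auto simp: less_SUP_iff)
  have "eventually (\<lambda>x. x0 \<le> x) at_top"
    by (rule eventually_ge_at_top)
  then show "eventually (\<lambda>x. y < f x) at_top"
  proof (rule eventually_mono)
    fix x assume "x0 \<le> x"
    then have "f x0 \<le> f x"
      using mono x0 by auto
    then show "y < f x"
      using x0 by (meson order.strict_trans2)
  qed
next
  fix y assume y: "(SUP x\<in>{0<..}. f x) < y"
  have "eventually (\<lambda>x::real. 0 < x) at_top"
    by (rule eventually_gt_at_top)
  then show "eventually (\<lambda>x. f x < y) at_top"
  proof (rule eventually_mono)
    fix x :: real assume "0 < x"
    then have "f x \<le> (SUP x\<in>{0<..}. f x)"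
      by (intro SUP_upper) auto
    then show "f x < y"
      using y by (rule le_less_trans)
  qed
qed

lemma nu_eq_SUP_elasticity:
  assumes b: "\<And>n. 0 \<le> b n" "0 < b 0" and R: "conv_radius b = ereal R" "0 < R"
  shows "((\<lambda>y. ereal (elasticity b y)) \<longlongrightarrow> nu b) (at_left R)"
    and "nu b = (SUP y\<in>{0<..<R}. ereal (elasticity b y))"
proof -
  let ?S = "SUP y\<in>{0<..<R}. ereal (elasticity b y)"
  have lim: "((\<lambda>y. ereal (elasticity b y)) \<longlongrightarrow> ?S) (at_left R)"
    using R b by (intro tendsto_at_left_SUP_mono) (auto intro!: elasticity_mono[of b])
  have "eventually (\<lambda>y. ereal (elasticity b y) = ereal (Psi b y)) (at_left R)"
    using R by (intro eventually_at_left_real[THEN eventually_mono]) (auto simp: Psi_eq_elasticity)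
  then have "((\<lambda>y. ereal (Psi b y)) \<longlongrightarrow> ?S) (at_left R)"
    using lim by (rule tendsto_cong[THEN iffD1])
  then show "nu b = ?S"
    using R by (simp add: nu_def tendsto_Lim)
  then show "((\<lambda>y. ereal (elasticity b y)) \<longlongrightarrow> nu b) (at_left R)"
    using lim by simp
qed

lemma nu_eq_SUP_elasticity_at_top:
  assumes b: "\<And>n. 0 \<le> b n" "0 < b 0" and R: "conv_radius b = \<infinity>"
  shows "nu b = (SUP y\<in>{0<..}. ereal (elasticity b y))"
proof -
  let ?S = "SUP y\<in>{0<..}. ereal (elasticity b y)"
  have lim: "((\<lambda>y. ereal (elasticity b y)) \<longlongrightarrow> ?S) at_top"
    using R b by (intro tendsto_at_top_SUP_mono) (auto intro!: elasticity_mono[of b])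
  have "eventually (\<lambda>y. ereal (elasticity b y) = ereal (Psi b y)) at_top"
    using R by (intro eventually_gt_at_top[THEN eventually_mono]) (auto simp: Psi_eq_elasticity)
  then have "((\<lambda>y. ereal (Psi b y)) \<longlongrightarrow> ?S) at_top"
    using lim by (rule tendsto_cong[THEN iffD1])
  then show ?thesis
    using R by (simp add: nu_def tendsto_Lim)
qed

lemma elasticity_pos:
  assumes b: "\<And>n. 0 \<le> b n" "0 < b 0" "0 < b (Suc k)" and y: "0 < y" "ereal y < conv_radius b"
  shows "0 < elasticity b y"
proof -
  have "ereal y < conv_radius (diffs b)"
    using y conv_radius_le_conv_radius_diffs[of b] by (rule_tac order.strict_trans2) auto
  then have "diffs b k * y ^ k \<le> gen_series (diffs b) y"
    using y diffs_nonneg[of b] b by (intro gen_series_term_le) auto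
  moreover have "0 < diffs b k * y ^ k"
    using b y by (simp add: diffs_def)
  moreover have "0 < gen_series b y"
    using gen_series_term_le[of b y 0] b y by simp
  ultimately show ?thesis
    using y by (simp add: elasticity_def)
qed

lemma nu_pos:
  assumes b: "\<And>n. 0 \<le> b n" "0 < b 0" "0 < b (Suc k)" and pos: "0 < conv_radius b"
  shows "0 < nu b"
proof (cases "conv_radius b")
  case (real R)
  with pos have R: "0 < R"
    by simp
  then have "ereal (elasticity b (R/2)) \<le> nu b"
    unfolding nu_eq_SUP_elasticity(2)[OF b(1,2) real R] by (intro SUP_upper) auto
  moreover have "0 < elasticity b (R/2)"
    using real R by (intro elasticity_pos[OF b]) auto
  ultimately show ?thesis
    by (meson ereal_less(2) order.strict_trans2)
next
  case PInf
  then have "ereal (elasticity b 1) \<le> nu b"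
    unfolding nu_eq_SUP_elasticity_at_top[OF b(1,2) PInf] by (intro SUP_upper) auto
  moreover have "0 < elasticity b 1"
    using PInf by (intro elasticity_pos[OF b]) auto
  ultimately show ?thesis
    by (meson ereal_less(2) order.strict_trans2)
qed (use pos in simp)

section \<open>The dissection equation\<close>

locale dissection_series =
  fixes phiD D phi :: "real fps"
  assumes nonneg: "\<And>k. fps_nth phiD k \<ge> 0"
    and pos0: "fps_nth phiD 0 > 0"
    and posk: "\<exists>k\<ge>2. fps_nth phiD k > 0"
    and D_eq: "D = fps_X * (phiD oo D)"
    and phi_def: "phi = inverse (1 - D)"
begin

abbreviation "a \<equiv> fps_nth phiD"
abbreviation "d \<equiv> fps_nth D"
abbreviation "h \<equiv> fps_nth phi"

abbreviation "F \<equiv> ennreal_powser a"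
abbreviation "G \<equiv> ennreal_powser d"
abbreviation "H \<equiv> ennreal_powser h"

abbreviation "f \<equiv> gen_series a"
abbreviation "g \<equiv> gen_series d"
abbreviation "p \<equiv> gen_series h"

abbreviation "\<tau> \<equiv> conv_radius a"
abbreviation "\<rho> \<equiv> conv_radius d"
abbreviation "\<sigma> \<equiv> conv_radius h"

lemma D_nth_0: "d 0 = 0"
  by (subst D_eq) simp

lemma D_nth_1: "d (Suc 0) = a 0"
  by (subst D_eq) simp

lemma nonneg_phiD: "nonneg_fps phiD"
  using nonneg by (simp add: nonneg_fps_def)

lemma nonneg_fps_X: "nonneg_fps fps_X"
  by (simp add: nonneg_fps_def fps_X_def)

lemma D_eq_cutoff_nth: "n \<le> N \<Longrightarrow> d n = fps_nth (fps_X * (phiD oo fps_cutoff N D)) n"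
  by (subst D_eq) (auto simp: fps_compose_cutoff_nth)

lemma D_nonneg: "0 \<le> d n"
proof (induction n rule: less_induct)
  case (less n)
  then have "nonneg_fps (fps_X * (phiD oo fps_cutoff n D))"
    by (intro nonneg_fps_mult nonneg_fps_compose nonneg_fps_X nonneg_phiD) (simp add: nonneg_fps_def)
  then show ?case
    using D_eq_cutoff_nth[of n n] by (simp add: nonneg_fps_def)
qed

lemma nonneg_fps_D: "nonneg_fps D"
  using D_nonneg by (simp add: nonneg_fps_def)

lemma phi_eq: "phi = 1 + D * phi"
proof -
  have "phi * (1 - D) = 1"
    unfolding phi_def by (rule inverse_mult_eq_1) (simp add: D_nth_0)
  then show ?thesis
    by (simp add: algebra_simps)
qed

lemma phi_eq_cutoff_nth: "n \<le> N \<Longrightarrow> h n = fps_nth (1 + D * fps_cutoff N phi) n"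
  by (subst phi_eq) (simp add: fps_mult_cutoff_nth D_nth_0)

lemma phi_nonneg: "0 \<le> h n"
proof (induction n rule: less_induct)
  case (less n)
  then have "nonneg_fps (1 + D * fps_cutoff n phi)"
    by (intro nonneg_fps_add nonneg_fps_mult nonneg_fps_D) (simp_all add: nonneg_fps_def)
  then show ?case
    using phi_eq_cutoff_nth[of n n] by (simp add: nonneg_fps_def)
qed

lemma nonneg_fps_phi: "nonneg_fps phi"
  using phi_nonneg by (simp add: nonneg_fps_def)

lemma G_eq: "G x = x * F (G x)"
  by (subst (1) D_eq)
    (simp add: ennreal_powser_X_mult ennreal_powser_compose nonneg_phiD nonneg_fps_D D_nth_0)

lemma H_eq: "H x = 1 + G x * H x"
  by (subst (1) phi_eq)
    (simp add: ennreal_powser_add ennreal_powser_mult ennreal_powser_one nonneg_fps_one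
      nonneg_fps_mult nonneg_fps_D nonneg_fps_phi)

lemma G_le:
  assumes "x * F y \<le> y"
  shows "G x \<le> y"
  unfolding ennreal_powser_def
proof (rule suminf_le_fixpoint[where f = "\<lambda>s. x * F s"])
  show "mono (\<lambda>s. x * F s)"
    by (intro monoI mult_left_mono ennreal_powser_mono) auto
  fix N
  let ?E = "fps_X * (phiD oo fps_cutoff N D)"
  have cutoff: "nonneg_fps (fps_cutoff N D)" "fps_nth (fps_cutoff N D) 0 = 0"
    by (simp_all add: nonneg_fps_cutoff nonneg_fps_D D_nth_0)
  have "(\<Sum>n<Suc N. ennreal (d n) * x ^ n) = (\<Sum>n<Suc N. ennreal (fps_nth ?E n) * x ^ n)"
    by (intro sum.cong refl) (simp add: D_eq_cutoff_nth[of _ N])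
  also have "\<dots> \<le> ennreal_powser (fps_nth ?E) x"
    by (rule ennreal_powser_partial_sum_le)
  also have "\<dots> = x * F (\<Sum>n<N. ennreal (d n) * x ^ n)"
    by (simp add: ennreal_powser_X_mult ennreal_powser_compose[OF nonneg_phiD cutoff]
        ennreal_powser_cutoff)
  finally show "(\<Sum>n<Suc N. ennreal (d n) * x ^ n) \<le> x * F (\<Sum>n<N. ennreal (d n) * x ^ n)" .
qed (rule assms)

lemma H_le:
  assumes "1 + G x * c \<le> c"
  shows "H x \<le> c"
  unfolding ennreal_powser_def
proof (rule suminf_le_fixpoint[where f = "\<lambda>s. 1 + G x * s"])
  show "mono (\<lambda>s. 1 + G x * s)"
    by (intro monoI add_left_mono mult_left_mono) auto
  fix N
  let ?E = "1 + D * fps_cutoff N phi"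
  have nonneg: "nonneg_fps 1" "nonneg_fps (D * fps_cutoff N phi)"
    by (simp_all add: nonneg_fps_one nonneg_fps_mult nonneg_fps_D nonneg_fps_cutoff nonneg_fps_phi)
  have "(\<Sum>n<Suc N. ennreal (h n) * x ^ n) = (\<Sum>n<Suc N. ennreal (fps_nth ?E n) * x ^ n)"
    by (intro sum.cong refl) (simp add: phi_eq_cutoff_nth[of _ N])
  also have "\<dots> \<le> ennreal_powser (fps_nth ?E) x"
    by (rule ennreal_powser_partial_sum_le)
  also have "\<dots> = 1 + G x * (\<Sum>n<N. ennreal (h n) * x ^ n)"
    by (simp add: ennreal_powser_add[OF nonneg] ennreal_powser_one ennreal_powser_cutoff
        ennreal_powser_mult nonneg_fps_D nonneg_fps_cutoff nonneg_fps_phi)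
  finally show "(\<Sum>n<Suc N. ennreal (h n) * x ^ n) \<le> 1 + G x * (\<Sum>n<N. ennreal (h n) * x ^ n)" .
qed (rule assms)

lemma H_finite:
  assumes "G x \<le> ennreal y" "0 \<le> y" "y < 1"
  shows "H x < \<infinity>"
proof -
  define c where "c = 1 / (1 - y)"
  have "1 + G x * ennreal c \<le> 1 + ennreal y * ennreal c"
    using assms(1) by (intro add_left_mono mult_right_mono) auto
  also have "\<dots> = ennreal (1 + y * c)"
    using assms by (simp add: c_def flip: ennreal_mult)
  also have "1 + y * c = c"
    using assms by (simp add: c_def field_simps)
  finally have "H x \<le> ennreal c"
    by (rule H_le)
  then show ?thesis
    using le_less_trans by fastforce
qed

lemma G_eq_g: "0 \<le> t \<Longrightarrow> ereal t < \<rho> \<Longrightarrow> G (ennreal t) = ennreal (g t)"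
  by (rule ennreal_powser_eq_gen_series_in_radius[OF D_nonneg])

lemma H_eq_p: "0 \<le> t \<Longrightarrow> ereal t < \<sigma> \<Longrightarrow> H (ennreal t) = ennreal (p t)"
  by (rule ennreal_powser_eq_gen_series_in_radius[OF phi_nonneg])

lemma F_eq_f: "0 \<le> y \<Longrightarrow> ereal y < \<tau> \<Longrightarrow> F (ennreal y) = ennreal (f y)"
  by (rule ennreal_powser_eq_gen_series_in_radius[OF nonneg])

lemma g_nonneg: "0 \<le> t \<Longrightarrow> ereal t < \<rho> \<Longrightarrow> 0 \<le> g t"
  by (rule gen_series_nonneg[OF D_nonneg])

lemma f_ge: "0 \<le> y \<Longrightarrow> ereal y < \<tau> \<Longrightarrow> a 0 \<le> f y"
  using gen_series_term_le[of a y 0] nonneg by simp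

lemma f_pos: "0 \<le> y \<Longrightarrow> ereal y < \<tau> \<Longrightarrow> 0 < f y"
  using f_ge pos0 by fastforce

lemma g_strict_mono:
  assumes "0 \<le> s" "s < t" "ereal t < \<rho>"
  shows "g s < g t"
proof -
  have "ereal s < \<rho>"
    using assms le_less_trans[of "ereal s" "ereal t"] by simp
  then have summable: "summable (\<lambda>n. d n * s ^ n)" "summable (\<lambda>n. d n * t ^ n)"
    using assms summable_in_conv_radius[of s d] summable_in_conv_radius[of t d] by auto
  have "a 0 * (t - s) = (\<Sum>n\<in>{1}. d n * t ^ n - d n * s ^ n)"
    by (simp add: D_nth_1 algebra_simps)
  also have "\<dots> \<le> (\<Sum>n. d n * t ^ n - d n * s ^ n)"
    using summable assms D_nonneg
    by (intro sum_le_suminf summable_diff) (auto intro!: mult_left_mono power_mono)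
  also have "\<dots> = g t - g s"
    unfolding gen_series_def using summable by (simp add: suminf_diff)
  finally show ?thesis
    using pos0 assms by (smt (verit) mult_pos_pos)
qed

lemma g_pos: "0 < t \<Longrightarrow> ereal t < \<rho> \<Longrightarrow> 0 < g t"
  using g_strict_mono[of 0 t] by (simp add: gen_series_def D_nth_0)

lemma g_fixpoint:
  assumes "0 < t" "ereal t < \<rho>"
  shows "ereal (g t) \<le> \<tau>" and "t * f (g t) = g t"
proof -
  have eq: "ennreal (g t) = ennreal t * F (ennreal (g t))"
    using G_eq[of "ennreal t"] G_eq_g assms by simp
  have "F (ennreal (g t)) \<noteq> \<infinity>"
  proof
    assume "F (ennreal (g t)) = \<infinity>"
    then show False
      using eq assms by (simp add: ennreal_mult_top)
  qed
  then have "F (ennreal (g t)) < \<infinity>"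
    by (simp add: top.not_eq_extremum)
  then have summable: "summable (\<lambda>n. a n * g t ^ n)" and le: "ereal (g t) \<le> \<tau>"
    using ennreal_powser_finite[OF nonneg g_nonneg] assms by auto
  show "ereal (g t) \<le> \<tau>"
    by (fact le)
  have "F (ennreal (g t)) = ennreal (f (g t))"
    using ennreal_powser_eq_gen_series[OF nonneg g_nonneg summable] assms by simp
  moreover have "0 \<le> f (g t)"
    unfolding gen_series_def[of a] using summable nonneg g_nonneg[of t] assms
    by (intro suminf_nonneg) auto
  ultimately have "ennreal (g t) = ennreal (t * f (g t))"
    using eq assms by (simp add: ennreal_mult)
  then show "t * f (g t) = g t"
    using assms g_nonneg \<open>0 \<le> f (g t)\<close> by simp
qed

lemma g_lt_tau:
  assumes "0 < t" "ereal t < \<rho>"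
  shows "ereal (g t) < \<tau>"
proof -
  obtain t' where t': "t < t'" "ereal t' < \<rho>"
    using ereal_dense2[OF assms(2)] by auto
  then have "ereal (g t) < ereal (g t')"
    using assms g_strict_mono by simp
  also have "\<dots> \<le> \<tau>"
    using g_fixpoint(1)[of t'] assms t' by simp
  finally show ?thesis .
qed

lemma G_le_div_f:
  assumes "0 < y" "ereal y < \<tau>"
  shows "G (ennreal (y / f y)) \<le> ennreal y"
proof (rule G_le)
  show "ennreal (y / f y) * F (ennreal y) \<le> ennreal y"
    using assms f_pos[of y] by (simp add: F_eq_f flip: ennreal_mult)
qed

lemma rho_ge_div_f: "0 < y \<Longrightarrow> ereal y < \<tau> \<Longrightarrow> ereal (y / f y) \<le> \<rho>"
  using G_le_div_f[of y] f_pos[of y] le_less_trans[OF G_le_div_f]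
  by (intro ennreal_powser_finite(2)[OF D_nonneg]) auto

lemma sigma_ge:
  assumes "0 \<le> t" "ereal t < \<rho>" "g t < 1"
  shows "ereal t \<le> \<sigma>"
  using H_finite[of "ennreal t" "g t"] assms G_eq_g g_nonneg
  by (intro ennreal_powser_finite(2)[OF phi_nonneg]) auto

lemma sigma_le_rho: "\<sigma> \<le> \<rho>"
proof (rule dense_le)
  fix x assume "x < \<sigma>"
  show "x \<le> \<rho>"
  proof (cases x)
    case (real s)
    show ?thesis
    proof (cases "0 \<le> s")
      case True
      have "G (ennreal s) \<le> G (ennreal s) * H (ennreal s)"
        using H_eq[of "ennreal s"] mult_left_mono[of 1 "H (ennreal s)"]
        by (metis add_increasing2 mult.right_neutral order_refl zero_le)
      also have "\<dots> \<le> H (ennreal s)"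
        using H_eq[of "ennreal s"] by (metis add.commute le_iff_add)
      also have "\<dots> < \<infinity>"
        using H_eq_p True \<open>x < \<sigma>\<close> real by simp
      finally show ?thesis
        using ennreal_powser_finite(2)[OF D_nonneg True] real by simp
    qed (rule order.trans[OF _ conv_radius_nonneg], use real in simp)
  qed (use \<open>x < \<sigma>\<close> in auto)
qed

lemma below_sigma:
  assumes "0 \<le> t" "ereal t < \<sigma>"
  shows "ereal t < \<rho>" and "g t < 1" and "p t = 1 / (1 - g t)"
proof -
  show t: "ereal t < \<rho>"
    using assms sigma_le_rho by (rule_tac order.strict_trans2)
  have nonneg: "0 \<le> g t" "0 \<le> p t"
    using assms t g_nonneg gen_series_nonneg[OF phi_nonneg] by auto
  have "ennreal (p t) = ennreal (1 + g t * p t)"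
    using H_eq[of "ennreal t"] G_eq_g H_eq_p assms t nonneg by (simp add: ennreal_mult)
  then have eq: "p t = 1 + g t * p t"
    by (rule ennreal_inj[THEN iffD1, rotated 2]) (use nonneg in auto)
  then show "g t < 1"
    using nonneg by (smt (verit) mult_le_cancel_right1 mult_nonneg_nonneg)
  with eq show "p t = 1 / (1 - g t)"
    by (simp add: field_simps)
qed

lemma sigma_eq_0: "\<tau> = 0 \<Longrightarrow> \<sigma> = 0"
proof (rule ccontr)
  assume "\<tau> = 0" "\<sigma> \<noteq> 0"
  then have "0 < \<sigma>"
    using conv_radius_nonneg[of h] by simp
  then obtain t where "ereal 0 < ereal t" "ereal t < \<sigma>"
    using ereal_dense2 by (metis zero_ereal_def)
  then show False
    using g_lt_tau g_pos below_sigma(1) \<open>\<tau> = 0\<close> by fastforce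
qed

lemma sigma_pos:
  assumes "0 < \<tau>"
  shows "0 < \<sigma>"
proof -
  obtain y where y: "0 < y" "y < 1" "ereal y < \<tau>"
    using ereal_dense2[of 0 "min \<tau> 1"] assms by (auto simp: zero_ereal_def one_ereal_def)
  then have "H (ennreal (y / f y)) < \<infinity>"
    using G_le_div_f by (intro H_finite) auto
  then have "ereal (y / f y) \<le> \<sigma>"
    using f_pos[of y] y by (intro ennreal_powser_finite(2)[OF phi_nonneg]) auto
  moreover have "0 < y / f y"
    using f_pos[of y] y by simp
  ultimately show ?thesis
    by (meson ereal_less(2) order.strict_trans2)
qed

text \<open>With \<open>a (Suc m) > 0\<close>, \<open>m \<ge> 1\<close>, the equation \<open>g = t f(g)\<close> and \<open>g \<ge> a 0 t\<close> force
  \<open>a (Suc m) a 0^m t^(Suc m) \<le> 1\<close>, which fails for large \<open>t\<close>.\<close>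
lemma rho_finite: "\<rho> \<noteq> \<infinity>"
proof
  assume rho: "\<rho> = \<infinity>"
  obtain m where m: "1 \<le> m" "0 < a (Suc m)"
    using posk by (metis One_nat_def Suc_le_D Suc_le_mono numeral_2_eq_2)
  define c where "c = a (Suc m) * a 0 ^ m"
  have c: "0 < c"
    using m pos0 by (simp add: c_def)
  define t where "t = 1 + 1 / c"
  have t: "1 \<le> t" "ereal t < \<rho>"
    using c rho by (simp_all add: t_def)
  define y where "y = g t"
  have y: "0 < y" "ereal y < \<tau>" "t * f y = y"
    using g_pos[of t] g_lt_tau[of t] g_fixpoint(2)[of t] t by (simp_all add: y_def)
  have "a 0 * t \<le> y"
    using gen_series_term_le[of d t 1] D_nonneg t by (simp add: y_def D_nth_1)
  then have lower: "c * t ^ Suc m \<le> t * a (Suc m) * y ^ m"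
    using t m pos0 power_mono[of "a 0 * t" y m]
    by (simp add: c_def power_mult_distrib mult_ac mult_left_mono)
  have "y * (t * a (Suc m) * y ^ m) = t * (a (Suc m) * y ^ Suc m)"
    by (simp add: mult_ac)
  also have "\<dots> \<le> t * f y"
    using gen_series_term_le[of a y "Suc m"] nonneg y t by (intro mult_left_mono) auto
  also have "\<dots> = y * 1"
    using y(3) by simp
  finally have upper: "t * a (Suc m) * y ^ m \<le> 1"
    using y(1) by (simp only: mult_le_cancel_left_pos)
  have "c * t \<le> c * t ^ Suc m"
    using t c power_increasing[of 1 "Suc m" t] by simp
  moreover have "c * t = c + 1"
    using c by (simp add: t_def field_simps)
  ultimately show False
    using lower upper c by linarith
qed

abbreviation "g' \<equiv> gen_series (diffs d)"

lemma g_has_derivative: "0 \<le> t \<Longrightarrow> ereal t < \<rho> \<Longrightarrow> (g has_real_derivative g' t) (at t)"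
  by (rule gen_series_has_real_derivative) simp

lemma g'_ge: "0 \<le> t \<Longrightarrow> ereal t < \<rho> \<Longrightarrow> a 0 \<le> g' t"
  using gen_series_term_le[of "diffs d" t 0] diffs_nonneg[of d] D_nonneg
    conv_radius_le_conv_radius_diffs[of d]
  by (auto simp: diffs_def D_nth_1 intro: order.strict_trans2)

text \<open>Implicit differentiation of \<open>g t = t f (g t)\<close>.\<close>
lemma f_g_eq:
  assumes t: "0 < t" "ereal t < \<rho>"
  shows "f (g t) = g' t * (1 - elasticity a (g t))"
proof -
  let ?f' = "gen_series (diffs a)"
  have gt: "0 < g t" "ereal (g t) < \<tau>"
    using g_pos g_lt_tau t by auto
  have dg: "(g has_real_derivative g' t) (at t)"
    using g_has_derivative t by simp
  obtain t' where t': "t < t'" "ereal t' < \<rho>"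
    using ereal_dense2[OF t(2)] by auto
  have "((\<lambda>s. s * f (g s)) has_real_derivative 1 * f (g t) + ?f' (g t) * g' t * t) (at t)"
    using gt by (intro DERIV_mult DERIV_ident DERIV_chain2[OF gen_series_has_real_derivative dg]) simp
  then have "(g has_real_derivative 1 * f (g t) + ?f' (g t) * g' t * t) (at t)"
  proof (rule has_field_derivative_transform_within_open[of _ _ _ "{0<..<t'}"])
    fix s assume s: "s \<in> {0<..<t'}"
    then have "ereal s < \<rho>"
      by (intro order.strict_trans[OF _ t'(2)]) simp
    with s show "s * f (g s) = g s"
      by (simp add: g_fixpoint(2))
  qed (use t t' in simp_all)
  then have "g' t = 1 * f (g t) + ?f' (g t) * g' t * t"
    by (rule DERIV_unique[OF dg])
  moreover have "elasticity a (g t) = t * f (g t) * ?f' (g t) / f (g t)"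
    unfolding elasticity_def by (simp only: g_fixpoint(2)[OF t])
  then have "elasticity a (g t) = t * ?f' (g t)"
    using f_pos[of "g t"] gt by simp
  ultimately show ?thesis
    by (simp add: algebra_simps)
qed

lemma elasticity_g_bounds:
  assumes "0 < t" "ereal t < \<rho>"
  shows "0 \<le> elasticity a (g t)" and "elasticity a (g t) < 1"
proof -
  show "0 \<le> elasticity a (g t)"
    using g_pos[OF assms] g_lt_tau[OF assms] by (intro elasticity_nonneg nonneg) auto
  have "0 < g' t * (1 - elasticity a (g t))"
    using f_g_eq f_pos g_pos g_lt_tau assms by (metis less_imp_le)
  moreover have "0 < g' t"
    using g'_ge[of t] pos0 assms by simp
  ultimately show "elasticity a (g t) < 1"
    by (simp add: zero_less_mult_iff)
qed

lemma Psi_phi_eq: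
  assumes t: "0 < t" "ereal t < \<sigma>"
  shows "Psi h t = g t / ((1 - elasticity a (g t)) * (1 - g t))"
proof -
  have rho: "ereal t < \<rho>" and g1: "g t < 1"
    using below_sigma t by auto
  obtain t' where t': "t < t'" "ereal t' < \<sigma>"
    using ereal_dense2[OF t(2)] by auto
  have "((\<lambda>s. inverse (1 - g s)) has_real_derivative
      - (inverse (1 - g t) * (0 - g' t) * inverse (1 - g t))) (at t)"
    using g_has_derivative[of t] t rho g1 by (intro DERIV_inverse' DERIV_diff DERIV_const) auto
  then have "(p has_real_derivative g' t / (1 - g t) ^ 2) (at t)"
  proof (rule has_field_derivative_transform_within_open[of _ _ _ "{0<..<t'}", THEN DERIV_cong])
    fix s assume s: "s \<in> {0<..<t'}"
    then have "ereal s < \<sigma>"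
      by (intro order.strict_trans[OF _ t'(2)]) simp
    with s show "inverse (1 - g s) = p s"
      by (simp add: below_sigma(3) inverse_eq_divide)
  qed (use t t' in \<open>auto simp: power2_eq_square field_simps\<close>)
  then have Psi: "Psi h t = t * g' t / (1 - g t)"
    using below_sigma(3)[of t] t g1 by (simp add: Psi_def DERIV_imp_deriv power2_eq_square)
  have "t * g' t * (1 - elasticity a (g t)) = g t"
    using g_fixpoint(2)[OF t(1) rho] unfolding f_g_eq[OF t(1) rho] by (simp add: mult.assoc)
  then have "t * g' t = g t / (1 - elasticity a (g t))"
    using elasticity_g_bounds(2)[OF t(1) rho] by (subst eq_divide_eq) auto
  then show ?thesis
    unfolding Psi by simp
qed

end

section \<open>The parameter of \<open>\<phi>\<close> when \<open>\<phi>\<^sub>D\<close> has positive radius\<close>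

locale dissection_series_pos_radius = dissection_series +
  assumes tau_pos: "0 < conv_radius (fps_nth phiD)"
begin

definition r :: real where "r = real_of_ereal \<sigma>"

definition L :: real where "L = (SUP t\<in>{0<..<r}. g t)"

lemma sigma_eq_r: "\<sigma> = ereal r" and r_pos: "0 < r"
proof -
  have "\<sigma> \<noteq> \<infinity>"
    using sigma_le_rho rho_finite by auto
  moreover have "0 < \<sigma>"
    using sigma_pos tau_pos by simp
  ultimately show "\<sigma> = ereal r" "0 < r"
    unfolding r_def by (cases \<sigma>; simp)+
qed

lemma below_r:
  assumes "t \<in> {0<..<r}"
  shows "ereal t < \<rho>" "0 < g t" "g t < 1" "ereal (g t) < \<tau>"
proof -
  have t: "0 < t" "ereal t < \<sigma>"
    using assms sigma_eq_r by auto
  then show "ereal t < \<rho>" "g t < 1"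
    using below_sigma by auto
  then show "0 < g t" "ereal (g t) < \<tau>"
    using g_pos g_lt_tau t by auto
qed

lemma eventually_below_r: "eventually (\<lambda>t. t \<in> {0<..<r}) (at_left r)"
  using r_pos by (intro eventually_at_left_real) auto

lemma g_tendsto_L: "(g \<longlongrightarrow> L) (at_left r)"
  unfolding L_def
proof (rule tendsto_at_left_SUP_mono[OF r_pos])
  fix s t assume "0 < s" "s \<le> t" "t < r"
  then show "g s \<le> g t"
    using g_strict_mono[of s t] below_r(1)[of t] by force
next
  show "bdd_above (g ` {0<..<r})"
    using below_r(3) by (intro bdd_aboveI[of _ 1]) force
qed

lemma L_bounds: "0 < L" "L \<le> 1" "ereal L \<le> \<tau>"
proof -
  have "eventually (\<lambda>t. g t \<le> 1) (at_left r)"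
    using eventually_below_r by (rule eventually_mono) (simp add: below_r(3) less_imp_le)
  then show "L \<le> 1"
    by (rule tendsto_upperbound[OF g_tendsto_L]) simp
  have "g (r/2) \<le> L"
    unfolding L_def using r_pos below_r(3)
    by (intro cSUP_upper bdd_aboveI[of _ 1]) (auto intro: less_imp_le)
  then show "0 < L"
    using below_r(2)[of "r/2"] r_pos by simp
  have "((\<lambda>t. ereal (g t)) \<longlongrightarrow> ereal L) (at_left r)"
    using g_tendsto_L by simp
  moreover have "eventually (\<lambda>t. ereal (g t) \<le> \<tau>) (at_left r)"
    using eventually_below_r by (rule eventually_mono) (simp add: below_r(4) less_imp_le)
  ultimately show "ereal L \<le> \<tau>"
    by (rule tendsto_upperbound) simp
qed

text \<open>Otherwise \<open>g\<close> is continuous at \<open>r\<close> with \<open>g r = L < 1\<close>, and \<open>sigma_ge\<close> applies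
  slightly to the right of \<open>r\<close>.\<close>
lemma rho_eq_r_if_L_lt_1:
  assumes "L < 1"
  shows "\<rho> = ereal r"
proof (rule ccontr)
  assume "\<rho> \<noteq> ereal r"
  then have r: "ereal r < \<rho>"
    using sigma_le_rho sigma_eq_r by simp
  then have "(g \<longlongrightarrow> g r) (at r)"
    using isCont_gen_series[of r d] r_pos by (simp add: isCont_def)
  moreover have "g r = L"
    using tendsto_unique[OF _ g_tendsto_L] calculation filterlim_at_split by force
  ultimately have "eventually (\<lambda>s. g s < 1) (at_right r)"
    using assms order_tendstoD(2) by (force simp: eventually_at_split)
  moreover obtain r' where r': "r < r'" "ereal r' < \<rho>"
    using ereal_dense2[OF r] by auto
  then have "eventually (\<lambda>s. s \<in> {r<..<r'}) (at_right r)"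
    by (intro eventually_at_right_real) simp
  ultimately obtain s where s: "g s < 1" "r < s" "s < r'"
    using eventually_happens[OF eventually_conj] by fastforce
  then have "ereal s < \<rho>"
    by (intro order.strict_trans[OF _ r'(2)]) simp
  then have "ereal s \<le> \<sigma>"
    using sigma_ge[of s] s r_pos by simp
  then show False
    using s sigma_eq_r by simp
qed

lemma div_f_g: "t \<in> {0<..<r} \<Longrightarrow> g t / f (g t) = t"
  using g_fixpoint(2)[of t] f_pos[of "g t"] below_r[of t] by (auto simp: field_simps)

text \<open>If the elasticity at \<open>L\<close> were below 1, \<open>y / f y\<close> would increase past its value \<open>r\<close>
  at \<open>L\<close>, and \<open>rho_ge_div_f\<close> would push \<open>\<rho>\<close> beyond \<open>r\<close>.\<close>
lemma elasticity_L_ge_1: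
  assumes L: "L < 1" "ereal L < \<tau>"
  shows "1 \<le> elasticity a L"
proof (rule ccontr)
  assume "\<not> 1 \<le> elasticity a L"
  define T where "T y = y / f y" for y
  have L0: "0 < L" and fL: "0 < f L"
    using L_bounds f_pos[of L] L by auto
  have "((\<lambda>t. T (g t)) \<longlongrightarrow> T L) (at_left r)"
    unfolding T_def using isCont_gen_series[of L a] L L0 fL
    by (intro isCont_tendsto_compose[OF _ g_tendsto_L] continuous_intros) auto
  moreover have "eventually (\<lambda>t. t = T (g t)) (at_left r)"
    using eventually_below_r by (rule eventually_mono) (simp add: T_def div_f_g)
  then have "((\<lambda>t. T (g t)) \<longlongrightarrow> r) (at_left r)"
    by (rule tendsto_cong[THEN iffD1]) (rule tendsto_ident_at)
  ultimately have TL: "T L = r"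
    using tendsto_unique by force
  have "(T has_real_derivative (1 * f L - L * gen_series (diffs a) L) / (f L * f L)) (at L)"
    unfolding T_def using gen_series_has_real_derivative[of L a] L L0 fL
    by (intro DERIV_divide DERIV_ident) auto
  moreover have "1 * f L - L * gen_series (diffs a) L = f L * (1 - elasticity a L)"
    using fL by (simp add: elasticity_def field_simps)
  ultimately obtain \<delta> where "0 < \<delta>" and \<delta>: "\<And>e. 0 < e \<Longrightarrow> e < \<delta> \<Longrightarrow> T L < T (L + e)"
    using DERIV_pos_inc_right \<open>\<not> 1 \<le> elasticity a L\<close> fL by force
  obtain y where y: "L < y" "y < L + \<delta>" "ereal y < \<tau>"
    using ereal_dense2[of L "min \<tau> (L + \<delta>)"] L \<open>0 < \<delta>\<close> by auto
  then have "ereal (T y) \<le> \<rho>"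
    unfolding T_def using L0 by (intro rho_ge_div_f) auto
  moreover have "r < T y"
    using \<delta>[of "y - L"] y TL by simp
  ultimately show False
    using rho_eq_r_if_L_lt_1[OF L(1)] by simp
qed

lemma elasticity_g_limit_le_1:
  assumes "((\<lambda>t. ereal (elasticity a (g t))) \<longlongrightarrow> c) (at_left r)"
  shows "c \<le> 1"
proof (rule tendsto_upperbound[OF assms])
  show "eventually (\<lambda>t. ereal (elasticity a (g t)) \<le> 1) (at_left r)"
    using eventually_below_r
    by (rule eventually_mono) (simp add: elasticity_g_bounds(2) below_r(1) less_imp_le)
qed simp

lemma elasticity_g_tendsto_L:
  "ereal L < \<tau> \<Longrightarrow> ((\<lambda>t. elasticity a (g t)) \<longlongrightarrow> elasticity a L) (at_left r)"
  using L_bounds f_pos[of L]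
  by (intro isCont_tendsto_compose[OF isCont_elasticity g_tendsto_L]) auto

lemma elasticity_g_tendsto_nu:
  assumes "ereal L = \<tau>"
  shows "((\<lambda>t. ereal (elasticity a (g t))) \<longlongrightarrow> nu a) (at_left r)"
proof -
  have "((\<lambda>y. ereal (elasticity a y)) \<longlongrightarrow> nu a) (at_left L)"
    using nu_eq_SUP_elasticity(1)[of a L] nonneg pos0 assms L_bounds by simp
  moreover have "eventually (\<lambda>t. g t < L) (at_left r)"
    using eventually_below_r
  proof (rule eventually_mono)
    fix t assume "t \<in> {0<..<r}"
    then have "ereal (g t) < ereal L"
      using below_r(4) assms by simp
    then show "g t < L"
      by simp
  qed
  then have "filterlim g (at_left L) (at_left r)"
    by (intro tendsto_imp_filterlim_at_left[OF g_tendsto_L]) simp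
  ultimately show ?thesis
    by (rule filterlim_compose)
qed

lemma nu_phi_eq_Lim: "nu h = Lim (at_left r) (\<lambda>t. ereal (Psi h t))"
  using sigma_eq_r r_pos by (simp add: nu_def)

lemma nu_phi_infinite:
  assumes lower: "eventually (\<lambda>t. u t \<le> Psi h t) (at_left r)" and "filterlim u at_top (at_left r)"
  shows "nu h = \<infinity>"
proof -
  have "filterlim (Psi h) at_top (at_left r)"
    using filterlim_at_top_mono assms by blast
  then show ?thesis
    unfolding nu_phi_eq_Lim by (intro tendsto_Lim) (simp_all add: tendsto_PInfty_eq_at_top)
qed

lemma nu_phi_infinite_if_L_eq_1:
  assumes "L = 1"
  shows "nu h = \<infinity>"
proof (rule nu_phi_infinite)
  show "filterlim (\<lambda>t. g t / (1 - g t)) at_top (at_left r)"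
    using g_tendsto_L assms eventually_below_r
    by (intro LIM_at_top_divide) (auto intro!: tendsto_eq_intros elim!: eventually_mono simp: below_r(3))
  show "eventually (\<lambda>t. g t / (1 - g t) \<le> Psi h t) (at_left r)"
    using eventually_below_r
  proof (rule eventually_mono)
    fix t assume t: "t \<in> {0<..<r}"
    then have E: "0 \<le> elasticity a (g t)" "elasticity a (g t) < 1" and g: "0 < g t" "g t < 1"
      using elasticity_g_bounds below_r by auto
    then have "(1 - elasticity a (g t)) * (1 - g t) \<le> 1 - g t"
      by (intro mult_left_le_one_le) auto
    then have "g t / (1 - g t) \<le> g t / ((1 - elasticity a (g t)) * (1 - g t))"
      using E g by (intro divide_left_mono) auto
    also have "\<dots> = Psi h t"
      using Psi_phi_eq[of t] t sigma_eq_r by simp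
    finally show "g t / (1 - g t) \<le> Psi h t" .
  qed
qed

lemma nu_phi_infinite_if_elasticity_tendsto_1:
  assumes "((\<lambda>t. elasticity a (g t)) \<longlongrightarrow> 1) (at_left r)"
  shows "nu h = \<infinity>"
proof (rule nu_phi_infinite)
  have "eventually (\<lambda>t. 0 < 1 - elasticity a (g t)) (at_left r)"
    using eventually_below_r by (rule eventually_mono) (simp add: elasticity_g_bounds(2) below_r(1))
  then show "filterlim (\<lambda>t. g t / (1 - elasticity a (g t))) at_top (at_left r)"
    using assms L_bounds(1)
    by (intro LIM_at_top_divide[OF g_tendsto_L]) (auto intro!: tendsto_eq_intros)
  show "eventually (\<lambda>t. g t / (1 - elasticity a (g t)) \<le> Psi h t) (at_left r)"
    using eventually_below_r
  proof (rule eventually_mono)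
    fix t assume t: "t \<in> {0<..<r}"
    then have E: "elasticity a (g t) < 1" and g: "0 < g t" "g t < 1"
      using elasticity_g_bounds below_r by auto
    then have "(1 - elasticity a (g t)) * (1 - g t) \<le> 1 - elasticity a (g t)"
      by (intro mult_right_le_one_le) auto
    then have "g t / (1 - elasticity a (g t)) \<le> g t / ((1 - elasticity a (g t)) * (1 - g t))"
      using E g by (intro divide_left_mono) auto
    also have "\<dots> = Psi h t"
      using Psi_phi_eq[of t] t sigma_eq_r by simp
    finally show "g t / (1 - elasticity a (g t)) \<le> Psi h t" .
  qed
qed

lemma nu_phi_infinite_if_L_lt_tau:
  assumes "L < 1" "ereal L < \<tau>"
  shows "nu h = \<infinity>"
proof (rule nu_phi_infinite_if_elasticity_tendsto_1)
  have "elasticity a L \<le> 1"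
    using elasticity_g_limit_le_1[of "ereal (elasticity a L)"] elasticity_g_tendsto_L[OF assms(2)]
    by simp
  then have "elasticity a L = 1"
    using elasticity_L_ge_1[OF assms] by simp
  then show "((\<lambda>t. elasticity a (g t)) \<longlongrightarrow> 1) (at_left r)"
    using elasticity_g_tendsto_L[OF assms(2)] by simp
qed

lemma nu_phi_finite:
  assumes L: "L < 1" "ereal L = \<tau>" and nu: "nu a < 1"
  shows "nu h = ereal (L / ((1 - L) * (1 - real_of_ereal (nu a))))"
proof -
  have lim: "((\<lambda>t. ereal (elasticity a (g t))) \<longlongrightarrow> nu a) (at_left r)"
    by (rule elasticity_g_tendsto_nu[OF L(2)])
  have "eventually (\<lambda>t. 0 \<le> ereal (elasticity a (g t))) (at_left r)"
    using eventually_below_r by (rule eventually_mono) (simp add: elasticity_g_bounds(1) below_r(1))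
  then have "0 \<le> nu a"
    by (rule tendsto_lowerbound[OF lim]) simp
  then obtain e where e: "nu a = ereal e" "e < 1"
    using nu by (cases "nu a") auto
  have "eventually (\<lambda>t. g t / ((1 - elasticity a (g t)) * (1 - g t)) = Psi h t) (at_left r)"
    using eventually_below_r by (rule eventually_mono) (simp add: Psi_phi_eq sigma_eq_r)
  moreover have "((\<lambda>t. g t / ((1 - elasticity a (g t)) * (1 - g t))) \<longlongrightarrow> L / ((1 - e) * (1 - L)))
      (at_left r)"
    using lim e L by (intro tendsto_intros g_tendsto_L) auto
  ultimately have "(Psi h \<longlongrightarrow> L / ((1 - e) * (1 - L))) (at_left r)"
    by (rule tendsto_cong[THEN iffD1])
  then show ?thesis
    unfolding nu_phi_eq_Lim using e by (intro tendsto_Lim) (simp_all add: mult.commute)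
qed

lemma nu_phi_if_nu_ge_1:
  assumes "1 \<le> nu a"
  shows "nu h = \<infinity>"
proof -
  consider "L = 1" | "L < 1" "ereal L < \<tau>" | "L < 1" "ereal L = \<tau>"
    using L_bounds by fastforce
  then show ?thesis
  proof cases
    case 3
    have "nu a \<le> 1"
      using elasticity_g_limit_le_1 elasticity_g_tendsto_nu[OF 3(2)] by simp
    then have "((\<lambda>t. ereal (elasticity a (g t))) \<longlongrightarrow> ereal 1) (at_left r)"
      using elasticity_g_tendsto_nu[OF 3(2)] assms by (simp add: one_ereal_def)
    then show ?thesis
      by (intro nu_phi_infinite_if_elasticity_tendsto_1) simp
  qed (simp_all add: nu_phi_infinite_if_L_eq_1 nu_phi_infinite_if_L_lt_tau)
qed

lemma nu_phi_if_small_radius: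
  assumes nu: "nu a < 1" and tau: "\<tau> < 1"
  shows "nu h = ereal (real_of_ereal \<tau> / ((1 - real_of_ereal \<tau>) * (1 - real_of_ereal (nu a))))"
proof -
  have L: "L < 1"
    using L_bounds(3) tau by (metis less_ereal.simps(1) one_ereal_def order.strict_trans1)
  have "ereal L = \<tau>"
  proof (rule ccontr)
    assume "ereal L \<noteq> \<tau>"
    then have Lt: "ereal L < \<tau>"
      using L_bounds by simp
    then have "ereal (elasticity a L) \<le> nu a"
      using nu_eq_SUP_elasticity(2)[of a] nonneg pos0 tau_pos tau L_bounds
      by (cases \<tau>) (auto intro!: SUP_upper)
    then show False
      using elasticity_L_ge_1[OF L Lt] nu by (metis ereal_less_eq(3) leD one_ereal_def order.trans)
  qed
  then show ?thesis
    using nu_phi_finite[OF L _ nu] by (metis real_of_ereal.simps(1))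
qed

lemma nu_phi_if_large_radius:
  assumes "1 \<le> \<tau>"
  shows "nu h = \<infinity>"
proof (cases "L = 1")
  case False
  then have "L < 1"
    using L_bounds by simp
  moreover have "ereal L < \<tau>"
    using \<open>L < 1\<close> assms by (metis less_ereal.simps(1) one_ereal_def order.strict_trans2)
  ultimately show ?thesis
    by (rule nu_phi_infinite_if_L_lt_tau)
qed (rule nu_phi_infinite_if_L_eq_1)

end

theorem mainTheorem15:
  fixes phiD D phi :: "real fps"
  assumes nonneg: "\<And>k. fps_nth phiD k \<ge> 0"
    and pos0: "fps_nth phiD 0 > 0"
    and posk: "\<exists>k\<ge>2. fps_nth phiD k > 0"
    and D_eq: "D = fps_X * (phiD oo D)"
    and phi_def: "phi = inverse (1 - D)"
  shows "(typeI (fps_nth phiD) \<longrightarrow>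
            typeIa (fps_nth phi) \<and> nu (fps_nth phi) = \<infinity>)
       \<and> (typeII (fps_nth phiD) \<longrightarrow>
            (let \<tau> = real_of_ereal (conv_radius (fps_nth phiD));
                 \<nu>D = real_of_ereal (nu (fps_nth phiD))
             in (conv_radius (fps_nth phiD) < 1 \<longrightarrow>
                   nu (fps_nth phi) = ereal (\<tau> / ((1 - \<tau>) * (1 - \<nu>D))))
              \<and> (conv_radius (fps_nth phiD) \<ge> 1 \<longrightarrow>
                   typeIa (fps_nth phi) \<and> nu (fps_nth phi) = \<infinity>)))
       \<and> (typeIII (fps_nth phiD) \<longrightarrow>
            nu (fps_nth phi) = 0 \<and> typeIII (fps_nth phi))"
proof -
  interpret dissection_series phiD D phi
    using assms by unfold_locales
  show ?thesis
  proof (cases "\<tau> = 0")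
    case True
    then have "nu a = 0" "nu h = 0"
      using sigma_eq_0 by (simp_all add: nu_def)
    then show ?thesis
      by (simp add: typeI_def typeII_def typeIII_def)
  next
    case False
    then interpret dissection_series_pos_radius phiD D phi
      by unfold_locales (simp add: order_less_le conv_radius_nonneg)
    obtain k where "0 < a (Suc k)"
      using posk by (metis Suc_pred le_zero_eq not_gr_zero zero_neq_numeral)
    then have "0 < nu a"
      using nu_pos[of a] nonneg pos0 tau_pos by blast
    then show ?thesis
      using nu_phi_if_nu_ge_1 nu_phi_if_small_radius nu_phi_if_large_radius
      by (auto simp: typeI_def typeIa_def typeII_def typeIII_def Let_def)
  qed
qed

end
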